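(* Let $\mathcal{M}$ be an ergodic (not necessarily reversible) Markov chain on a finite state space, and let $\widetilde{\mathcal{M}}$ be its continuization. Then $$\Phi(\mathcal{M})\ \ge\ \frac{\frac12-\frac{1}{2e}}{\tau(\widetilde{\mathcal{M}},\frac{1}{2e})}.$$
   Context: A (discrete-time) Markov chain on a finite state space $\Omega$ with transition matrix $P$ is ergodic if irreducible and aperiodic; it then has a unique stationary distribution $\pi>0$. Variation distance: $\|\theta_1-\theta_2\|=\frac12\sum_i|\theta_1(i)-\theta_2(i)|$. Continuization: with $Q=P-I$, the continuous-time chain $\widetilde{\mathcal{M}}$ has time-$t$ transition matrix $\widetilde P^t=\exp(Qt)$ (matrix exponential), $t\ge0$ real. Its mixing time from $x$ is $\tau_x(\widetilde{\mathcal{M}},\varepsilon)=\inf\{t>0: \|v_x\exp(Qt')-\pi\|\le\varepsilon \text{ for all real } t'\ge t\}$, where $v_x$ is the row unit vector at $x$, and $\tau(\widetilde{\mathcal{M}},\varepsilon)=\max_x\tau_x(\widetilde{\mathcal{M}},\varepsilon)$. Conductance: for $S\subset\Omega$ with $0<\pi(S)<1$ and $\bar S=\Omega\setminus S$, $\Phi_S(\mathcal{M})=\dfrac{\sum_{i\in S}\sum_{j\in\bar S}\pi(i)P(i,j)+\sum_{i\in\bar S}\sum_{j\in S}\pi(i)P(i,j)}{2\pi(S)\pi(\bar S)}$, and $\Phi(\mathcal{M})=\min_S\Phi_S(\mathcal{M})$ over all such $S$. *)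

theory Defs
  imports Complex_Main
begin

definition id_mat :: "'a \<Rightarrow> 'a \<Rightarrow> real" where
  "id_mat x y = (if x = y then 1 else 0)"

fun mpow :: "('a::finite \<Rightarrow> 'a \<Rightarrow> real) \<Rightarrow> nat \<Rightarrow> 'a \<Rightarrow> 'a \<Rightarrow> real" where
  "mpow M 0 = id_mat"
| "mpow M (Suc n) = (\<lambda>x y. \<Sum>z\<in>UNIV. mpow M n x z * M z y)"

definition stochastic :: "('a::finite \<Rightarrow> 'a \<Rightarrow> real) \<Rightarrow> bool" where
  "stochastic P \<longleftrightarrow> (\<forall>x y. P x y \<ge> 0) \<and> (\<forall>x. (\<Sum>y\<in>UNIV. P x y) = 1)"

definition irreducible_chain :: "('a::finite \<Rightarrow> 'a \<Rightarrow> real) \<Rightarrow> bool" where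
  "irreducible_chain P \<longleftrightarrow> (\<forall>x y. \<exists>n. mpow P n x y > 0)"

definition aperiodic_chain :: "('a::finite \<Rightarrow> 'a \<Rightarrow> real) \<Rightarrow> bool" where
  "aperiodic_chain P \<longleftrightarrow> (\<forall>x. Gcd {n::nat. n \<ge> 1 \<and> mpow P n x x > 0} = 1)"

definition ergodic :: "('a::finite \<Rightarrow> 'a \<Rightarrow> real) \<Rightarrow> bool" where
  "ergodic P \<longleftrightarrow> stochastic P \<and> irreducible_chain P \<and> aperiodic_chain P"

definition stationary :: "('a::finite \<Rightarrow> 'a \<Rightarrow> real) \<Rightarrow> ('a \<Rightarrow> real) \<Rightarrow> bool" where
  "stationary P \<pi> \<longleftrightarrow> (\<forall>x. \<pi> x \<ge> 0) \<and> (\<Sum>x\<in>UNIV. \<pi> x) = 1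
      \<and> (\<forall>y. (\<Sum>x\<in>UNIV. \<pi> x * P x y) = \<pi> y)"

definition generator :: "('a \<Rightarrow> 'a \<Rightarrow> real) \<Rightarrow> 'a \<Rightarrow> 'a \<Rightarrow> real" where
  "generator P x y = P x y - id_mat x y"

text \<open>Matrix exponential exp(Q t), entrywise as the power series sum_k (tQ)^k / k!.\<close>
definition cont_kernel :: "('a::finite \<Rightarrow> 'a \<Rightarrow> real) \<Rightarrow> real \<Rightarrow> 'a \<Rightarrow> 'a \<Rightarrow> real" where
  "cont_kernel P t x y = (\<Sum>k. t ^ k / fact k * mpow (generator P) k x y)"

definition var_dist :: "('a::finite \<Rightarrow> real) \<Rightarrow> ('a \<Rightarrow> real) \<Rightarrow> real" where
  "var_dist \<theta>1 \<theta>2 = (1/2) * (\<Sum>i\<in>UNIV. \<bar>\<theta>1 i - \<theta>2 i\<bar>)"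

definition mixing_time_from ::
  "('a::finite \<Rightarrow> 'a \<Rightarrow> real) \<Rightarrow> ('a \<Rightarrow> real) \<Rightarrow> real \<Rightarrow> 'a \<Rightarrow> real" where
  "mixing_time_from P \<pi> \<epsilon> x =
     Inf {t. t > 0 \<and> (\<forall>t'. t' \<ge> t \<longrightarrow> var_dist (cont_kernel P t' x) \<pi> \<le> \<epsilon>)}"

definition mixing_time ::
  "('a::finite \<Rightarrow> 'a \<Rightarrow> real) \<Rightarrow> ('a \<Rightarrow> real) \<Rightarrow> real \<Rightarrow> real" where
  "mixing_time P \<pi> \<epsilon> = Max (range (mixing_time_from P \<pi> \<epsilon>))"

definition cond_set :: "('a::finite \<Rightarrow> 'a \<Rightarrow> real) \<Rightarrow> ('a \<Rightarrow> real) \<Rightarrow> 'a set \<Rightarrow> real" where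
  "cond_set P \<pi> S =
     ((\<Sum>i\<in>S. \<Sum>j\<in>UNIV - S. \<pi> i * P i j) + (\<Sum>i\<in>UNIV - S. \<Sum>j\<in>S. \<pi> i * P i j))
     / (2 * sum \<pi> S * sum \<pi> (UNIV - S))"

definition conductance :: "('a::finite \<Rightarrow> 'a \<Rightarrow> real) \<Rightarrow> ('a \<Rightarrow> real) \<Rightarrow> real" where
  "conductance P \<pi> = Min (cond_set P \<pi> ` {S. 0 < sum \<pi> S \<and> sum \<pi> S < 1})"

end

(* Write K_t = exp (t (P - I)) = e^(-t) sum_n t^n/n! P^n.  Started from pi restricted to S, the
   chain P moves at most n F mass out of S in n steps, where F = flow P pi S (UNIV - S), because
   that mass never exceeds pi; averaging over the Poisson number of steps, K_t moves at most t F.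
   Beyond the mixing time T every row of K_t puts mass at least pi (UNIV - S) - eps outside S,
   so pi S (pi (UNIV - S) - eps) <= T F, which for pi (UNIV - S) >= 1/2 gives
   Phi_S >= (1 - 2 eps) / T, twice the claimed bound.  Mixing times are finite because K_1
   has positive entries, which needs irreducibility only, so K_t
   contracts in variation distance by Doeblin's argument. *)

theory Submission
  imports Defs
begin

section \<open>Matrix powers and the matrix exponential\<close>

lemma sum_mult_id_mat [simp]:
  fixes y :: "'a::finite"
  shows "(\<Sum>z\<in>UNIV. f z * id_mat z y) = (f y :: real)"
  by (simp add: id_mat_def if_distrib[of "(*) _"] cong: if_cong)

lemma sum_id_mat_mult [simp]:
  fixes x :: "'a::finite"
  shows "(\<Sum>z\<in>UNIV. id_mat x z * f z) = (f x :: real)"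
  by (simp add: id_mat_def if_distrib[of "\<lambda>a. a * _"] cong: if_cong)

lemma mpow_add:
  fixes M :: "'a::finite \<Rightarrow> 'a \<Rightarrow> real"
  shows "mpow M (i + j) x y = (\<Sum>z\<in>UNIV. mpow M i x z * mpow M j z y)"
proof (induction j arbitrary: y)
  case 0
  then show ?case by simp
next
  case (Suc j)
  have "mpow M (i + Suc j) x y
      = (\<Sum>w\<in>UNIV. \<Sum>z\<in>UNIV. mpow M i x z * mpow M j z w * M w y)"
    by (simp add: Suc sum_distrib_right)
  also have "\<dots> = (\<Sum>z\<in>UNIV. mpow M i x z * mpow M (Suc j) z y)"
    by (subst sum.swap) (simp add: sum_distrib_left mult.assoc)
  finally show ?case .
qed

lemma abs_mpow_le:
  fixes M :: "'a::finite \<Rightarrow> 'a \<Rightarrow> real"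
  shows "\<bar>mpow M k x y\<bar> \<le> (\<Sum>z\<in>UNIV. \<Sum>w\<in>UNIV. \<bar>M z w\<bar>) ^ k"
proof (induction k arbitrary: y)
  case 0
  then show ?case by (simp add: id_mat_def)
next
  case (Suc k)
  define B where "B = (\<Sum>z\<in>UNIV. \<Sum>w\<in>UNIV. \<bar>M z w\<bar>)"
  have "\<bar>mpow M (Suc k) x y\<bar> \<le> (\<Sum>z\<in>UNIV. \<bar>mpow M k x z\<bar> * \<bar>M z y\<bar>)"
    by (simp add: sum_abs[THEN order_trans] abs_mult)
  also have "\<dots> \<le> (\<Sum>z\<in>UNIV. B ^ k * \<bar>M z y\<bar>)"
    by (intro sum_mono mult_right_mono) (auto simp: B_def Suc)
  also have "\<dots> \<le> B ^ k * B"
    unfolding sum_distrib_left[symmetric] B_def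
    by (intro mult_left_mono sum_mono member_le_sum) (auto intro: sum_nonneg zero_le_power)
  finally show ?case by (simp add: B_def mult.commute)
qed

lemma binomial_sum_Suc:
  fixes a :: "nat \<Rightarrow> 'b::comm_semiring_1"
  shows "(\<Sum>j\<le>Suc n. of_nat (Suc n choose j) * a j)
      = (\<Sum>j\<le>n. of_nat (n choose j) * (a j + a (Suc j)))"
proof -
  have "(\<Sum>j\<le>n. of_nat (n choose j) * a j) = (\<Sum>j\<le>Suc n. of_nat (n choose j) * a j)"
    by (simp add: binomial_eq_0)
  also have "\<dots> = a 0 + (\<Sum>j\<le>n. of_nat (n choose Suc j) * a (Suc j))"
    by (subst sum.atMost_Suc_shift) simp
  finally show ?thesis
    by (subst sum.atMost_Suc_shift) (simp add: sum.distrib algebra_simps)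
qed

lemma mpow_generator_binomial:
  fixes P :: "'a::finite \<Rightarrow> 'a \<Rightarrow> real"
  shows "mpow P n x y = (\<Sum>j\<le>n. of_nat (n choose j) * mpow (generator P) j x y)"
proof (induction n arbitrary: y)
  case 0
  then show ?case by simp
next
  case (Suc n)
  let ?Q = "generator P"
  have "mpow P (Suc n) x y = mpow P n x y + (\<Sum>z\<in>UNIV. mpow P n x z * ?Q z y)"
    by (simp add: generator_def right_diff_distrib sum_subtractf)
  also have "(\<Sum>z\<in>UNIV. mpow P n x z * ?Q z y)
      = (\<Sum>j\<le>n. of_nat (n choose j) * mpow ?Q (Suc j) x y)"
    by (simp add: Suc sum_distrib_left sum_distrib_right mult.assoc) (rule sum.swap)
  finally show ?case
    by (simp only: Suc binomial_sum_Suc[of n "\<lambda>j. mpow ?Q j x y"] sum.distrib distrib_left)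
qed

lemma sums_exp_real: "(\<lambda>n. t ^ n / fact n) sums exp (t::real)"
  using exp_converges[of t] by (simp add: divide_inverse mult.commute)

lemma summable_exp_series_bounded:
  fixes a :: "nat \<Rightarrow> real"
  assumes "\<And>n. \<bar>a n\<bar> \<le> B ^ n"
  shows "summable (\<lambda>n. norm (t ^ n / fact n * a n))"
proof (rule summable_comparison_test[OF _ summable_exp[of "\<bar>t\<bar> * B"]])
  have "\<bar>t\<bar> ^ n / fact n * \<bar>a n\<bar> \<le> \<bar>t\<bar> ^ n / fact n * B ^ n" for n
    using assms by (intro mult_left_mono) auto
  then show "\<exists>N. \<forall>n\<ge>N. norm (norm (t ^ n / fact n * a n)) \<le> inverse (fact n) * (\<bar>t\<bar> * B) ^ n"
    by (simp add: abs_mult power_abs power_mult_distrib divide_inverse mult_ac)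
qed

lemma exp_series_Cauchy_product:
  fixes a b :: "nat \<Rightarrow> real"
  assumes "summable (\<lambda>n. norm (s ^ n / fact n * a n))"
    and "summable (\<lambda>n. norm (t ^ n / fact n * b n))"
  shows "(\<lambda>n. (\<Sum>i\<le>n. of_nat (n choose i) * s ^ i * t ^ (n - i) * a i * b (n - i)) / fact n)
           sums ((\<Sum>n. s ^ n / fact n * a n) * (\<Sum>n. t ^ n / fact n * b n))"
proof -
  have Cauchy_term: "(\<Sum>i\<le>n. (s ^ i / fact i * a i) * (t ^ (n - i) / fact (n - i) * b (n - i)))
      = (\<Sum>i\<le>n. of_nat (n choose i) * s ^ i * t ^ (n - i) * a i * b (n - i)) / fact n" for n
    unfolding sum_divide_distrib by (rule sum.cong) (simp_all add: binomial_fact)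
  from Cauchy_product_sums[OF assms] show ?thesis
    unfolding Cauchy_term .
qed

definition mat_exp :: "('a::finite \<Rightarrow> 'a \<Rightarrow> real) \<Rightarrow> real \<Rightarrow> 'a \<Rightarrow> 'a \<Rightarrow> real" where
  "mat_exp M t x y = (\<Sum>k. t ^ k / fact k * mpow M k x y)"

lemma cont_kernel_eq_mat_exp: "cont_kernel P t x y = mat_exp (generator P) t x y"
  by (simp add: cont_kernel_def mat_exp_def)

lemma summable_mat_exp: "summable (\<lambda>k. norm (t ^ k / fact k * mpow M k x y))"
  by (rule summable_exp_series_bounded[OF abs_mpow_le])

lemma mat_exp_sums: "(\<lambda>k. t ^ k / fact k * mpow M k x y) sums mat_exp M t x y"
  unfolding mat_exp_def by (rule summable_sums[OF summable_norm_cancel[OF summable_mat_exp]])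

lemma mat_exp_add:
  fixes M :: "'a::finite \<Rightarrow> 'a \<Rightarrow> real"
  shows "(\<Sum>z\<in>UNIV. mat_exp M s x z * mat_exp M t z y) = mat_exp M (s + t) x y"
proof -
  let ?c = "\<lambda>n i. of_nat (n choose i) * s ^ i * t ^ (n - i)"
  have "(\<lambda>n. \<Sum>z\<in>UNIV. (\<Sum>i\<le>n. ?c n i * mpow M i x z * mpow M (n - i) z y) / fact n)
      sums (\<Sum>z\<in>UNIV. mat_exp M s x z * mat_exp M t z y)"
    unfolding mat_exp_def by (intro sums_sum exp_series_Cauchy_product summable_mat_exp)
  moreover have "(\<Sum>z\<in>UNIV. (\<Sum>i\<le>n. ?c n i * mpow M i x z * mpow M (n - i) z y) / fact n)
      = (s + t) ^ n / fact n * mpow M n x y" for n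
  proof -
    have "(\<Sum>z\<in>UNIV. \<Sum>i\<le>n. ?c n i * mpow M i x z * mpow M (n - i) z y)
        = (\<Sum>i\<le>n. ?c n i * mpow M n x y)"
    proof (subst sum.swap, rule sum.cong)
      fix i assume "i \<in> {..n}"
      then have "mpow M n x y = (\<Sum>z\<in>UNIV. mpow M i x z * mpow M (n - i) z y)"
        using mpow_add[of M i "n - i" x y] by simp
      then show "(\<Sum>z\<in>UNIV. ?c n i * mpow M i x z * mpow M (n - i) z y) = ?c n i * mpow M n x y"
        by (simp add: sum_distrib_left mult.assoc)
    qed simp
    also have "\<dots> = (s + t) ^ n * mpow M n x y"
      by (simp add: binomial_ring sum_distrib_right)
    finally show ?thesis
      by (simp add: sum_divide_distrib[symmetric])
  qed
  ultimately have "(\<lambda>n. (s + t) ^ n / fact n * mpow M n x y)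
      sums (\<Sum>z\<in>UNIV. mat_exp M s x z * mat_exp M t z y)"
    by simp
  then show ?thesis
    using mat_exp_sums by (rule sums_unique2)
qed

lemma sums_exp_mult_cont_kernel:
  fixes P :: "'a::finite \<Rightarrow> 'a \<Rightarrow> real"
  shows "(\<lambda>n. t ^ n / fact n * mpow P n x y) sums (exp t * cont_kernel P t x y)"
proof -
  let ?Q = "generator P"
  have exp_series: "summable (\<lambda>n. norm (t ^ n / fact n * 1))" "(\<Sum>n. t ^ n / fact n * 1) = exp t"
    using summable_exp_series_bounded[of "\<lambda>_. 1" 1] sums_unique[OF sums_exp_real] by auto
  have Cauchy_term: "(\<Sum>i\<le>n. of_nat (n choose i) * t ^ i * t ^ (n - i) * mpow ?Q i x y * 1) / fact n
      = t ^ n / fact n * mpow P n x y" for n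
  proof -
    have "(\<Sum>i\<le>n. of_nat (n choose i) * t ^ i * t ^ (n - i) * mpow ?Q i x y * 1)
        = (\<Sum>i\<le>n. t ^ n * (of_nat (n choose i) * mpow ?Q i x y))"
    proof (rule sum.cong)
      fix i assume "i \<in> {..n}"
      then have "t ^ i * t ^ (n - i) = t ^ n"
        by (simp add: power_add[symmetric])
      moreover have "of_nat (n choose i) * t ^ i * t ^ (n - i) * mpow ?Q i x y * 1
          = (t ^ i * t ^ (n - i)) * (of_nat (n choose i) * mpow ?Q i x y)"
        by (simp only: ac_simps mult_1_right)
      ultimately show "of_nat (n choose i) * t ^ i * t ^ (n - i) * mpow ?Q i x y * 1
          = t ^ n * (of_nat (n choose i) * mpow ?Q i x y)"
        by simp
    qed simp
    then show ?thesis
      by (simp add: mpow_generator_binomial[of P n] sum_distrib_left sum_divide_distrib)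
  qed
  have "(\<lambda>n. t ^ n / fact n * mpow P n x y) sums (mat_exp ?Q t x y * exp t)"
    using exp_series_Cauchy_product[OF summable_mat_exp exp_series(1), of t ?Q x y]
    unfolding mat_exp_def[symmetric] exp_series(2) Cauchy_term .
  then show ?thesis
    by (simp add: cont_kernel_eq_mat_exp mult.commute)
qed

section \<open>The continuized chain\<close>

lemma mpow_nonneg:
  fixes P :: "'a::finite \<Rightarrow> 'a \<Rightarrow> real"
  assumes "stochastic P"
  shows "0 \<le> mpow P k x y"
  using assms by (induction k arbitrary: y) (auto simp: stochastic_def id_mat_def intro!: sum_nonneg)

lemma mpow_row_sum:
  fixes P :: "'a::finite \<Rightarrow> 'a \<Rightarrow> real"
  assumes "stochastic P"
  shows "(\<Sum>y\<in>UNIV. mpow P k x y) = 1"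
proof (induction k)
  case 0
  then show ?case by (simp add: id_mat_def)
next
  case (Suc k)
  have "(\<Sum>y\<in>UNIV. mpow P (Suc k) x y) = (\<Sum>z\<in>UNIV. mpow P k x z * (\<Sum>y\<in>UNIV. P z y))"
    by (simp add: sum_distrib_left) (rule sum.swap)
  also have "\<dots> = 1"
    using Suc assms by (simp add: stochastic_def)
  finally show ?case .
qed

lemma mpow_stationary:
  fixes P :: "'a::finite \<Rightarrow> 'a \<Rightarrow> real"
  assumes "stationary P \<pi>"
  shows "(\<Sum>x\<in>UNIV. \<pi> x * mpow P k x y) = \<pi> y"
proof (induction k arbitrary: y)
  case 0
  then show ?case by simp
next
  case (Suc k)
  have "(\<Sum>x\<in>UNIV. \<pi> x * mpow P (Suc k) x y)
      = (\<Sum>z\<in>UNIV. (\<Sum>x\<in>UNIV. \<pi> x * mpow P k x z) * P z y)"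
    by (simp add: sum_distrib_left sum_distrib_right mult_ac) (rule sum.swap)
  also have "\<dots> = \<pi> y"
    using Suc assms by (simp add: stationary_def)
  finally show ?case .
qed

lemma cont_kernel_sum_eq:
  fixes P :: "'a::finite \<Rightarrow> 'a \<Rightarrow> real"
  assumes "\<And>n. (\<Sum>x\<in>UNIV. u x * (\<Sum>y\<in>UNIV. mpow P n x y * v y)) = c"
  shows "(\<Sum>x\<in>UNIV. u x * (\<Sum>y\<in>UNIV. cont_kernel P t x y * v y)) = c"
proof -
  have "(\<lambda>n. \<Sum>x\<in>UNIV. u x * (\<Sum>y\<in>UNIV. t ^ n / fact n * mpow P n x y * v y))
      sums (\<Sum>x\<in>UNIV. u x * (\<Sum>y\<in>UNIV. exp t * cont_kernel P t x y * v y))"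
    by (rule sums_sum, rule sums_mult, rule sums_sum, rule sums_mult2, rule sums_exp_mult_cont_kernel)
  moreover have "(\<Sum>x\<in>UNIV. u x * (\<Sum>y\<in>UNIV. t ^ n / fact n * mpow P n x y * v y))
      = t ^ n / fact n * c" for n
    unfolding assms[of n, symmetric] by (simp add: sum_distrib_left mult_ac)
  moreover have "(\<Sum>x\<in>UNIV. u x * (\<Sum>y\<in>UNIV. exp t * cont_kernel P t x y * v y))
      = exp t * (\<Sum>x\<in>UNIV. u x * (\<Sum>y\<in>UNIV. cont_kernel P t x y * v y))"
    by (simp add: sum_distrib_left mult_ac)
  ultimately have "(\<lambda>n. t ^ n / fact n * c)
      sums (exp t * (\<Sum>x\<in>UNIV. u x * (\<Sum>y\<in>UNIV. cont_kernel P t x y * v y)))"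
    by simp
  from sums_unique2[OF this sums_mult2[OF sums_exp_real]] show ?thesis
    by simp
qed

lemma cont_kernel_row_sum:
  fixes P :: "'a::finite \<Rightarrow> 'a \<Rightarrow> real"
  assumes "stochastic P"
  shows "(\<Sum>y\<in>UNIV. cont_kernel P t x y) = 1"
proof -
  have "(\<Sum>x'\<in>UNIV. id_mat x x' * (\<Sum>y\<in>UNIV. cont_kernel P t x' y * 1)) = 1"
    by (rule cont_kernel_sum_eq) (simp add: mpow_row_sum[OF assms] id_mat_def)
  then show ?thesis by simp
qed

lemma cont_kernel_stationary:
  fixes P :: "'a::finite \<Rightarrow> 'a \<Rightarrow> real"
  assumes "stationary P \<pi>"
  shows "(\<Sum>x\<in>UNIV. \<pi> x * cont_kernel P t x y) = \<pi> y"
proof -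
  have "(\<Sum>x\<in>UNIV. \<pi> x * (\<Sum>y'\<in>UNIV. cont_kernel P t x y' * id_mat y' y)) = \<pi> y"
    by (rule cont_kernel_sum_eq) (simp add: mpow_stationary[OF assms])
  then show ?thesis by simp
qed

lemma mpow_le_cont_kernel:
  fixes P :: "'a::finite \<Rightarrow> 'a \<Rightarrow> real"
  assumes "stochastic P" "0 \<le> t"
  shows "t ^ n / fact n * mpow P n x y \<le> exp t * cont_kernel P t x y"
proof (rule sums_le[OF _ sums_single sums_exp_mult_cont_kernel])
  show "(if k = n then t ^ k / fact k * mpow P k x y else 0) \<le> t ^ k / fact k * mpow P k x y" for k
    using mpow_nonneg[OF assms(1)] assms(2) by auto
qed

lemma cont_kernel_nonneg:
  fixes P :: "'a::finite \<Rightarrow> 'a \<Rightarrow> real"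
  assumes "stochastic P" "0 \<le> t"
  shows "0 \<le> cont_kernel P t x y"
proof -
  have "0 \<le> exp t * cont_kernel P t x y"
    using mpow_nonneg[OF assms(1)] assms(2)
    by (intro sums_le[OF _ sums_zero sums_exp_mult_cont_kernel]) simp
  then show ?thesis by (simp add: zero_le_mult_iff)
qed

lemma cont_kernel_pos:
  fixes P :: "'a::finite \<Rightarrow> 'a \<Rightarrow> real"
  assumes "stochastic P" "irreducible_chain P" "0 < t"
  shows "0 < cont_kernel P t x y"
proof -
  obtain n where "0 < mpow P n x y"
    using assms(2) unfolding irreducible_chain_def by blast
  then have "0 < t ^ n / fact n * mpow P n x y"
    using assms(3) by simp
  also have "\<dots> \<le> exp t * cont_kernel P t x y"
    by (rule mpow_le_cont_kernel) (use assms in auto)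
  finally show ?thesis by (simp add: zero_less_mult_iff)
qed

lemma stationary_pos:
  fixes P :: "'a::finite \<Rightarrow> 'a \<Rightarrow> real"
  assumes "stochastic P" "irreducible_chain P" "stationary P \<pi>"
  shows "0 < \<pi> y"
proof -
  have \<pi>_nonneg: "\<And>x. 0 \<le> \<pi> x" and "sum \<pi> UNIV = 1"
    using assms(3) by (auto simp: stationary_def)
  then have "\<not> (\<forall>x. \<pi> x \<le> 0)"
    using sum_nonpos[of UNIV \<pi>] by auto
  then obtain x0 where "0 < \<pi> x0"
    by (auto simp: not_le)
  then have "0 < \<pi> x0 * cont_kernel P 1 x0 y"
    using cont_kernel_pos[OF assms(1,2)] by simp
  also have "\<dots> \<le> (\<Sum>x\<in>UNIV. \<pi> x * cont_kernel P 1 x y)"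
    by (intro member_le_sum mult_nonneg_nonneg \<pi>_nonneg cont_kernel_nonneg[OF assms(1)]) auto
  also have "\<dots> = \<pi> y"
    by (rule cont_kernel_stationary[OF assms(3)])
  finally show ?thesis .
qed

section \<open>Mixing times are finite\<close>

lemma doeblin_contraction:
  fixes A :: "'a::finite \<Rightarrow> 'a \<Rightarrow> real" and w :: "'a \<Rightarrow> real" and \<delta> :: real
  assumes "\<And>x y. \<delta> \<le> A x y" and "\<And>x. (\<Sum>y\<in>UNIV. A x y) = 1" and "(\<Sum>x\<in>UNIV. w x) = 0"
  shows "(\<Sum>y\<in>UNIV. \<bar>\<Sum>x\<in>UNIV. w x * A x y\<bar>)
      \<le> (1 - real (card (UNIV :: 'a set)) * \<delta>) * (\<Sum>x\<in>UNIV. \<bar>w x\<bar>)"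
proof -
  have "(\<Sum>x\<in>UNIV. w x * A x y) = (\<Sum>x\<in>UNIV. w x * (A x y - \<delta>))" for y
    using assms(3) by (simp add: right_diff_distrib sum_subtractf sum_distrib_right[symmetric])
  then have "(\<Sum>y\<in>UNIV. \<bar>\<Sum>x\<in>UNIV. w x * A x y\<bar>)
      \<le> (\<Sum>y\<in>UNIV. \<Sum>x\<in>UNIV. \<bar>w x\<bar> * (A x y - \<delta>))"
    using assms(1) by (intro sum_mono) (simp add: sum_abs[THEN order_trans] abs_mult)
  also have "\<dots> = (\<Sum>x\<in>UNIV. \<bar>w x\<bar> * (\<Sum>y\<in>UNIV. A x y - \<delta>))"
    by (subst sum.swap) (simp add: sum_distrib_left)
  also have "\<dots> = (1 - real (card (UNIV :: 'a set)) * \<delta>) * (\<Sum>x\<in>UNIV. \<bar>w x\<bar>)"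
    by (simp add: sum_subtractf assms(2) sum_distrib_right mult.commute)
  finally show ?thesis .
qed

lemma var_dist_le_1:
  fixes \<mu> \<nu> :: "'a::finite \<Rightarrow> real"
  assumes "\<And>x. 0 \<le> \<mu> x" "sum \<mu> UNIV = 1" "\<And>x. 0 \<le> \<nu> x" "sum \<nu> UNIV = 1"
  shows "var_dist \<mu> \<nu> \<le> 1"
proof -
  have "(\<Sum>x\<in>UNIV. \<bar>\<mu> x - \<nu> x\<bar>) \<le> (\<Sum>x\<in>UNIV. \<mu> x + \<nu> x)"
    using assms(1,3) by (intro sum_mono) (simp add: abs_le_iff add_increasing add_increasing2)
  then show ?thesis
    using assms(2,4) by (simp add: var_dist_def sum.distrib)
qed

lemma cont_kernel_contracts:
  fixes P :: "'a::finite \<Rightarrow> 'a \<Rightarrow> real"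
  assumes "stochastic P" "irreducible_chain P" "stationary P \<pi>"
  obtains \<rho> where "0 \<le> \<rho>" "\<rho> < 1"
    "\<And>t x. var_dist (cont_kernel P (t + 1) x) \<pi> \<le> \<rho> * var_dist (cont_kernel P t x) \<pi>"
proof
  define \<delta> where "\<delta> = Min (range (\<lambda>(a, b). cont_kernel P 1 a b))"
  have \<delta>_le: "\<delta> \<le> cont_kernel P 1 a b" for a b
    unfolding \<delta>_def by (rule Min_le) auto
  have "\<delta> \<in> range (\<lambda>(a, b). cont_kernel P 1 a b)"
    unfolding \<delta>_def by (rule Min_in) auto
  then have "0 < \<delta>"
    using cont_kernel_pos[OF assms(1,2)] by auto
  then show "1 - real (card (UNIV :: 'a set)) * \<delta> < 1"
    by (simp add: finite_UNIV_card_ge_0)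
  have "real (card (UNIV :: 'a set)) * \<delta> = (\<Sum>y\<in>(UNIV :: 'a set). \<delta>)"
    by simp
  also have "\<dots> \<le> (\<Sum>y\<in>UNIV. cont_kernel P 1 undefined y)"
    by (intro sum_mono \<delta>_le)
  finally show "0 \<le> 1 - real (card (UNIV :: 'a set)) * \<delta>"
    by (simp add: cont_kernel_row_sum[OF assms(1)])
  fix t x
  have "cont_kernel P (t + 1) x y - \<pi> y
      = (\<Sum>z\<in>UNIV. (cont_kernel P t x z - \<pi> z) * cont_kernel P 1 z y)" for y
    using mat_exp_add[of "generator P" t x 1 y] cont_kernel_stationary[OF assms(3), of 1 y]
    by (simp add: cont_kernel_eq_mat_exp left_diff_distrib sum_subtractf)
  moreover have "(\<Sum>z\<in>UNIV. cont_kernel P t x z - \<pi> z) = 0"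
    using assms(3) by (simp add: sum_subtractf cont_kernel_row_sum[OF assms(1)] stationary_def)
  ultimately show "var_dist (cont_kernel P (t + 1) x) \<pi>
      \<le> (1 - real (card (UNIV :: 'a set)) * \<delta>) * var_dist (cont_kernel P t x) \<pi>"
    using doeblin_contraction[OF \<delta>_le cont_kernel_row_sum[OF assms(1)]]
    by (simp add: var_dist_def)
qed

lemma cont_kernel_mixes:
  fixes P :: "'a::finite \<Rightarrow> 'a \<Rightarrow> real"
  assumes "stochastic P" "irreducible_chain P" "stationary P \<pi>" "0 < \<epsilon>"
  shows "\<exists>t0>0. \<forall>t\<ge>t0. var_dist (cont_kernel P t x) \<pi> \<le> \<epsilon>"
proof -
  obtain \<rho> where \<rho>: "0 \<le> \<rho>" "\<rho> < 1"
    and step: "\<And>t. var_dist (cont_kernel P (t + 1) x) \<pi> \<le> \<rho> * var_dist (cont_kernel P t x) \<pi>"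
    using cont_kernel_contracts[OF assms(1-3)] by metis
  have decay: "var_dist (cont_kernel P (t + real n) x) \<pi> \<le> \<rho> ^ n" if "0 \<le> t" for t n
  proof (induction n)
    case 0
    show ?case
      using that assms(3) cont_kernel_nonneg[OF assms(1)] cont_kernel_row_sum[OF assms(1)]
      by (simp add: var_dist_le_1 stationary_def)
  next
    case (Suc n)
    have "var_dist (cont_kernel P (t + real (Suc n)) x) \<pi>
        \<le> \<rho> * var_dist (cont_kernel P (t + real n) x) \<pi>"
      using step[of "t + real n"] by (simp add: ac_simps)
    also have "\<dots> \<le> \<rho> * \<rho> ^ n"
      using Suc \<rho>(1) by (rule mult_left_mono)
    finally show ?case by simp
  qed
  obtain n where "\<rho> ^ n < \<epsilon>"
    using real_arch_pow_inv[OF assms(4) \<rho>(2)] by blast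
  then have "var_dist (cont_kernel P t x) \<pi> \<le> \<epsilon>" if "real n + 1 \<le> t" for t
    using decay[of "t - real n" n] that by simp
  then show ?thesis
    by (intro exI[of _ "real n + 1"]) auto
qed

lemma mixing_time_from_nonneg:
  fixes P :: "'a::finite \<Rightarrow> 'a \<Rightarrow> real"
  assumes "stochastic P" "irreducible_chain P" "stationary P \<pi>" "0 < \<epsilon>"
  shows "0 \<le> mixing_time_from P \<pi> \<epsilon> x"
  unfolding mixing_time_from_def
  using cont_kernel_mixes[OF assms, of x] by (intro cInf_greatest) auto

lemma var_dist_le_of_mixing_time_less:
  fixes P :: "'a::finite \<Rightarrow> 'a \<Rightarrow> real"
  assumes "stochastic P" "irreducible_chain P" "stationary P \<pi>" "0 < \<epsilon>"
    and "mixing_time P \<pi> \<epsilon> < t"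
  shows "var_dist (cont_kernel P t x) \<pi> \<le> \<epsilon>"
proof -
  define X where "X = {t. t > 0 \<and> (\<forall>t'. t' \<ge> t \<longrightarrow> var_dist (cont_kernel P t' x) \<pi> \<le> \<epsilon>)}"
  have "mixing_time_from P \<pi> \<epsilon> x \<le> mixing_time P \<pi> \<epsilon>"
    unfolding mixing_time_def by (rule Max_ge) auto
  then have "Inf X < t"
    using assms(5) by (simp add: mixing_time_from_def X_def)
  moreover have "X \<noteq> {}" "bdd_below X"
    using cont_kernel_mixes[OF assms(1-4), of x] by (auto simp: X_def intro: bdd_belowI[of _ 0])
  ultimately obtain s where "s \<in> X" "s < t"
    using cInf_less_iff by blast
  then show ?thesis
    by (auto simp: X_def)
qed

lemma mixing_time_nonneg:
  fixes P :: "'a::finite \<Rightarrow> 'a \<Rightarrow> real"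
  assumes "stochastic P" "irreducible_chain P" "stationary P \<pi>" "0 < \<epsilon>"
  shows "0 \<le> mixing_time P \<pi> \<epsilon>"
  using mixing_time_from_nonneg[OF assms, of undefined]
  unfolding mixing_time_def by (auto intro: order_trans Max_ge)

section \<open>Ergodic flow and conductance\<close>

lemma sum_UNIV_diff:
  fixes f :: "'a::finite \<Rightarrow> 'b::ab_group_add"
  shows "sum f (UNIV - S) = sum f UNIV - sum f S"
  by (simp add: sum_diff)

definition flow :: "('a::finite \<Rightarrow> 'a \<Rightarrow> real) \<Rightarrow> ('a \<Rightarrow> real) \<Rightarrow> 'a set \<Rightarrow> 'a set \<Rightarrow> real" where
  "flow P \<pi> A B = (\<Sum>i\<in>A. \<Sum>j\<in>B. \<pi> i * P i j)"

lemma flow_out_eq_flow_in: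
  fixes P :: "'a::finite \<Rightarrow> 'a \<Rightarrow> real"
  assumes "stochastic P" "stationary P \<pi>"
  shows "flow P \<pi> S (UNIV - S) = flow P \<pi> (UNIV - S) S"
proof -
  have "flow P \<pi> S (UNIV - S) = sum \<pi> S - flow P \<pi> S S"
    using assms(1) unfolding flow_def
    by (simp add: sum_UNIV_diff sum_subtractf sum_distrib_left[symmetric] right_diff_distrib
        stochastic_def)
  also have "\<dots> = flow P \<pi> (UNIV - S) S"
    using assms(2) unfolding flow_def
    by (subst (1 2) sum.swap) (simp add: sum_UNIV_diff sum_subtractf stationary_def)
  finally show ?thesis .
qed

lemma mpow_flow_le:
  fixes P :: "'a::finite \<Rightarrow> 'a \<Rightarrow> real"
  assumes "stochastic P" "stationary P \<pi>"
  shows "flow (mpow P k) \<pi> S (UNIV - S) \<le> real k * flow P \<pi> S (UNIV - S)"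
proof -
  \<comment> \<open>the mass at time k of the chain started from pi restricted to S\<close>
  define v where "v k y = (\<Sum>x\<in>S. \<pi> x * mpow P k x y)" for k y
  have P_nonneg: "\<And>a b. 0 \<le> P a b" and \<pi>_nonneg: "\<And>a. 0 \<le> \<pi> a"
    using assms by (auto simp: stochastic_def stationary_def)
  have v_nonneg: "0 \<le> v k y" for k y
    unfolding v_def using \<pi>_nonneg mpow_nonneg[OF assms(1)] by (intro sum_nonneg mult_nonneg_nonneg)
  have v_le: "v k y \<le> \<pi> y" for k y
    unfolding v_def mpow_stationary[OF assms(2), of k y, symmetric]
    using \<pi>_nonneg mpow_nonneg[OF assms(1)] by (intro sum_mono2 mult_nonneg_nonneg) auto
  have v_Suc: "v (Suc k) y = (\<Sum>z\<in>UNIV. v k z * P z y)" for k y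
    unfolding v_def by (simp add: sum_distrib_left sum_distrib_right mult_ac) (rule sum.swap)
  have exit_le: "(\<Sum>y\<in>UNIV - S. P z y) \<le> 1" for z
    using assms(1) P_nonneg by (simp add: sum_UNIV_diff sum_nonneg stochastic_def)
  have "(\<Sum>y\<in>UNIV - S. v k y) \<le> real k * flow P \<pi> S (UNIV - S)"
  proof (induction k)
    case 0
    have "(\<Sum>y\<in>UNIV - S. v 0 y) = 0"
      unfolding v_def by (auto simp: id_mat_def intro!: sum.neutral)
    then show ?case
      by simp
  next
    case (Suc k)
    let ?out = "\<lambda>z. v k z * (\<Sum>y\<in>UNIV - S. P z y)"
    have "(\<Sum>y\<in>UNIV - S. v (Suc k) y) = (\<Sum>z\<in>UNIV. ?out z)"
      by (simp add: v_Suc sum_distrib_left) (rule sum.swap)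
    also have "\<dots> = (\<Sum>z\<in>S. ?out z) + (\<Sum>z\<in>UNIV - S. ?out z)"
      by (simp add: sum_UNIV_diff)
    also have "(\<Sum>z\<in>S. ?out z) \<le> flow P \<pi> S (UNIV - S)"
      unfolding flow_def sum_distrib_left[symmetric]
      by (intro sum_mono mult_right_mono v_le sum_nonneg P_nonneg)
    also have "(\<Sum>z\<in>UNIV - S. ?out z) \<le> (\<Sum>z\<in>UNIV - S. v k z)"
      using exit_le v_nonneg by (intro sum_mono) (simp add: mult_left_le)
    finally show ?case
      using Suc by (simp add: algebra_simps)
  qed
  moreover have "flow (mpow P k) \<pi> S (UNIV - S) = (\<Sum>y\<in>UNIV - S. v k y)"
    unfolding flow_def v_def by (rule sum.swap)
  ultimately show ?thesis
    by simp
qed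

lemma sums_of_nat_mult_exp: "(\<lambda>n. t ^ n / fact n * real n) sums (t * exp t)"
proof -
  have "t ^ Suc n / fact (Suc n) * real (Suc n) = t * (t ^ n / fact n)" for n
    by (simp add: field_simps del: of_nat_Suc)
  then have "(\<lambda>n. t ^ Suc n / fact (Suc n) * real (Suc n)) sums (t * exp t)"
    using sums_mult[OF sums_exp_real] by simp
  then show ?thesis
    using sums_Suc_iff[of "\<lambda>n. t ^ n / fact n * real n" "t * exp t"] by simp
qed

lemma cont_kernel_flow_le:
  fixes P :: "'a::finite \<Rightarrow> 'a \<Rightarrow> real"
  assumes "stochastic P" "stationary P \<pi>" "0 \<le> t"
  shows "flow (cont_kernel P t) \<pi> S (UNIV - S) \<le> t * flow P \<pi> S (UNIV - S)"
proof -
  let ?F = "flow P \<pi> S (UNIV - S)"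
  have "(\<lambda>n. \<Sum>x\<in>S. \<Sum>y\<in>UNIV - S. \<pi> x * (t ^ n / fact n * mpow P n x y))
      sums (\<Sum>x\<in>S. \<Sum>y\<in>UNIV - S. \<pi> x * (exp t * cont_kernel P t x y))"
    by (rule sums_sum, rule sums_sum, rule sums_mult, rule sums_exp_mult_cont_kernel)
  then have series: "(\<lambda>n. t ^ n / fact n * flow (mpow P n) \<pi> S (UNIV - S))
      sums (exp t * flow (cont_kernel P t) \<pi> S (UNIV - S))"
    by (simp add: flow_def sum_distrib_left mult.left_commute)
  have termwise: "t ^ n / fact n * flow (mpow P n) \<pi> S (UNIV - S) \<le> t ^ n / fact n * real n * ?F" for n
    unfolding mult.assoc[of _ "real n"]
    by (rule mult_left_mono[OF mpow_flow_le[OF assms(1,2)]]) (simp add: assms(3))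
  have "exp t * flow (cont_kernel P t) \<pi> S (UNIV - S) \<le> t * exp t * ?F"
    by (rule sums_le[OF termwise series sums_mult2[OF sums_of_nat_mult_exp]])
  then show ?thesis
    by (simp add: mult.left_commute)
qed

lemma var_dist_ge_sum_diff:
  fixes \<mu> \<nu> :: "'a::finite \<Rightarrow> real"
  assumes "sum \<mu> UNIV = sum \<nu> UNIV"
  shows "sum \<nu> (UNIV - S) - sum \<mu> (UNIV - S) \<le> var_dist \<mu> \<nu>"
proof -
  have "(\<Sum>y\<in>UNIV - S. \<nu> y - \<mu> y) = (\<Sum>y\<in>S. \<mu> y - \<nu> y)"
    using assms by (simp add: sum_subtractf sum_UNIV_diff)
  moreover have "(\<Sum>y\<in>UNIV - S. \<nu> y - \<mu> y) \<le> (\<Sum>y\<in>UNIV - S. \<bar>\<mu> y - \<nu> y\<bar>)"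
    and "(\<Sum>y\<in>S. \<mu> y - \<nu> y) \<le> (\<Sum>y\<in>S. \<bar>\<mu> y - \<nu> y\<bar>)"
    by (intro sum_mono; simp)+
  moreover have "(\<Sum>y\<in>UNIV. \<bar>\<mu> y - \<nu> y\<bar>)
      = (\<Sum>y\<in>S. \<bar>\<mu> y - \<nu> y\<bar>) + (\<Sum>y\<in>UNIV - S. \<bar>\<mu> y - \<nu> y\<bar>)"
    by (simp add: sum_UNIV_diff)
  ultimately show ?thesis
    by (simp add: var_dist_def sum_subtractf)
qed

lemma cond_set_compl: "cond_set P \<pi> (UNIV - S) = cond_set P \<pi> S"
  unfolding cond_set_def by (simp add: double_diff add.commute mult_ac)

lemma cond_set_eq_flow:
  fixes P :: "'a::finite \<Rightarrow> 'a \<Rightarrow> real"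
  assumes "stochastic P" "stationary P \<pi>"
  shows "cond_set P \<pi> S = flow P \<pi> S (UNIV - S) / (sum \<pi> S * sum \<pi> (UNIV - S))"
  using flow_out_eq_flow_in[OF assms, of S] by (simp add: cond_set_def flow_def)

lemma le_mult_of_forall_greater:
  fixes c T F :: real
  assumes "0 \<le> F" and "\<And>t. T < t \<Longrightarrow> c \<le> t * F"
  shows "c \<le> T * F"
proof (rule dense_ge)
  fix y assume "T * F < y"
  show "c \<le> y"
  proof (cases "F = 0")
    case True
    then show ?thesis
      using assms(2)[of "T + 1"] \<open>T * F < y\<close> by simp
  next
    case False
    with assms(1) \<open>T * F < y\<close> have "T < y / F"
      by (simp add: field_simps)
    then show ?thesis
      using assms(2)[of "y / F"] False by simp
  qed
qed

lemma flow_bound_of_mixing_time_less: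
  fixes P :: "'a::finite \<Rightarrow> 'a \<Rightarrow> real"
  assumes st: "stochastic P" and irr: "irreducible_chain P" and stat: "stationary P \<pi>"
    and "0 < \<epsilon>" "mixing_time P \<pi> \<epsilon> < t"
  shows "sum \<pi> S * (sum \<pi> (UNIV - S) - \<epsilon>) \<le> t * flow P \<pi> S (UNIV - S)"
proof -
  have \<pi>_nonneg: "\<And>x. 0 \<le> \<pi> x" and "sum \<pi> UNIV = 1"
    using stat by (auto simp: stationary_def)
  have "sum \<pi> (UNIV - S) - (\<Sum>y\<in>UNIV - S. cont_kernel P t x y) \<le> \<epsilon>" for x
  proof -
    have "sum \<pi> (UNIV - S) - (\<Sum>y\<in>UNIV - S. cont_kernel P t x y)
        \<le> var_dist (cont_kernel P t x) \<pi>"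
      using \<open>sum \<pi> UNIV = 1\<close> by (intro var_dist_ge_sum_diff) (simp add: cont_kernel_row_sum[OF st])
    also have "\<dots> \<le> \<epsilon>"
      using var_dist_le_of_mixing_time_less[OF st irr stat assms(4,5)] .
    finally show ?thesis .
  qed
  then have "(\<Sum>x\<in>S. \<pi> x * (sum \<pi> (UNIV - S) - (\<Sum>y\<in>UNIV - S. cont_kernel P t x y)))
      \<le> (\<Sum>x\<in>S. \<pi> x * \<epsilon>)"
    using \<pi>_nonneg by (intro sum_mono mult_left_mono)
  moreover have "flow (cont_kernel P t) \<pi> S (UNIV - S)
      = (\<Sum>x\<in>S. \<pi> x * (\<Sum>y\<in>UNIV - S. cont_kernel P t x y))"
    by (simp add: flow_def sum_distrib_left)
  ultimately have "sum \<pi> S * sum \<pi> (UNIV - S) - flow (cont_kernel P t) \<pi> S (UNIV - S)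
      \<le> sum \<pi> S * \<epsilon>"
    by (simp add: right_diff_distrib sum_subtractf sum_distrib_right[symmetric])
  moreover have "flow (cont_kernel P t) \<pi> S (UNIV - S) \<le> t * flow P \<pi> S (UNIV - S)"
    using mixing_time_nonneg[OF st irr stat assms(4)] assms(5)
    by (intro cont_kernel_flow_le[OF st stat]) simp
  ultimately show ?thesis
    by (simp add: algebra_simps)
qed

lemma cond_set_ge_mixing_time_of_half_le:
  fixes P :: "'a::finite \<Rightarrow> 'a \<Rightarrow> real"
  assumes st: "stochastic P" and irr: "irreducible_chain P" and stat: "stationary P \<pi>"
    and "0 < \<epsilon>" "0 < sum \<pi> S" "1/2 \<le> sum \<pi> (UNIV - S)"
  shows "(1 - 2 * \<epsilon>) / mixing_time P \<pi> \<epsilon> \<le> cond_set P \<pi> S"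
proof -
  define T where "T = mixing_time P \<pi> \<epsilon>"
  define a where "a = sum \<pi> S"
  define b where "b = sum \<pi> (UNIV - S)"
  define F where "F = flow P \<pi> S (UNIV - S)"
  have T_nonneg: "0 \<le> T"
    unfolding T_def using mixing_time_nonneg[OF st irr stat \<open>0 < \<epsilon>\<close>] .
  have F_nonneg: "0 \<le> F"
    using st stat unfolding F_def flow_def
    by (intro sum_nonneg mult_nonneg_nonneg) (auto simp: stochastic_def stationary_def)
  have "0 < a" "1/2 \<le> b"
    using assms(5,6) by (simp_all add: a_def b_def)
  then have "(1 - 2 * \<epsilon>) * (a * b) \<le> a * (b - \<epsilon>)"
    using \<open>0 < \<epsilon>\<close> by (simp add: algebra_simps)
  also have "\<dots> \<le> T * F"
    using F_nonneg flow_bound_of_mixing_time_less[OF st irr stat \<open>0 < \<epsilon>\<close>]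
    unfolding T_def a_def b_def F_def by (rule le_mult_of_forall_greater)
  finally have "(1 - 2 * \<epsilon>) * (a * b) \<le> T * F" .
  moreover have "cond_set P \<pi> S = F / (a * b)"
    unfolding cond_set_eq_flow[OF st stat] a_def b_def F_def ..
  moreover have "0 < a * b"
    using \<open>0 < a\<close> \<open>1/2 \<le> b\<close> by simp
  \<comment> \<open>if T = 0 the left-hand side is 0, by division by zero\<close>
  ultimately show ?thesis
    using T_nonneg F_nonneg unfolding T_def[symmetric]
    by (cases "T = 0") (simp_all add: divide_le_eq le_divide_eq mult.commute)
qed

lemma cond_set_ge_mixing_time:
  fixes P :: "'a::finite \<Rightarrow> 'a \<Rightarrow> real"
  assumes "stochastic P" "irreducible_chain P" "stationary P \<pi>"
    and "0 < \<epsilon>" "0 < sum \<pi> S" "sum \<pi> S < 1"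
  shows "(1 - 2 * \<epsilon>) / mixing_time P \<pi> \<epsilon> \<le> cond_set P \<pi> S"
proof (cases "1/2 \<le> sum \<pi> (UNIV - S)")
  case True
  then show ?thesis
    using assms by (intro cond_set_ge_mixing_time_of_half_le)
next
  case False
  have "sum \<pi> (UNIV - S) = 1 - sum \<pi> S"
    using assms(3) by (simp add: sum_UNIV_diff stationary_def)
  then have "(1 - 2 * \<epsilon>) / mixing_time P \<pi> \<epsilon> \<le> cond_set P \<pi> (UNIV - S)"
    using assms False by (intro cond_set_ge_mixing_time_of_half_le) (simp_all add: double_diff)
  then show ?thesis
    by (simp add: cond_set_compl)
qed

lemma exists_set_of_proper_mass:
  fixes P :: "'a::finite \<Rightarrow> 'a \<Rightarrow> real"
  assumes "2 \<le> card (UNIV :: 'a set)" "stochastic P" "irreducible_chain P" "stationary P \<pi>"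
  shows "\<exists>S. 0 < sum \<pi> S \<and> sum \<pi> S < 1"
proof -
  obtain x y :: 'a where "x \<noteq> y"
    using assms(1) card_le_Suc0_iff_eq[of "UNIV :: 'a set"] by auto
  have \<pi>_pos: "\<And>z. 0 < \<pi> z"
    using stationary_pos[OF assms(2-4)] .
  have "\<pi> x + \<pi> y \<le> sum \<pi> UNIV"
    using \<open>x \<noteq> y\<close> sum_mono2[of UNIV "{x, y}" \<pi>] \<pi>_pos by (simp add: less_imp_le)
  then have "0 < sum \<pi> {x} \<and> sum \<pi> {x} < 1"
    using \<pi>_pos[of x] \<pi>_pos[of y] assms(4) by (simp add: stationary_def)
  then show ?thesis ..
qed

theorem theorem18:
  fixes P :: "'a::finite \<Rightarrow> 'a \<Rightarrow> real" and \<pi> :: "'a \<Rightarrow> real"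
  assumes "card (UNIV :: 'a set) \<ge> 2"
    and "ergodic P"
    and "stationary P \<pi>"
  shows "conductance P \<pi> \<ge> (1/2 - 1/(2 * exp 1)) / mixing_time P \<pi> (1/(2 * exp 1))"
proof -
  have st: "stochastic P" and irr: "irreducible_chain P"
    using assms(2) by (auto simp: ergodic_def)
  define \<epsilon> :: real where "\<epsilon> = 1 / (2 * exp 1)"
  have "0 < \<epsilon>" "\<epsilon> \<le> 1/2"
    using one_le_exp_iff[of 1] by (auto simp: \<epsilon>_def)
  have "{S. 0 < sum \<pi> S \<and> sum \<pi> S < 1} \<noteq> {}"
    using exists_set_of_proper_mass[OF assms(1) st irr assms(3)] by blast
  then have "(1 - 2 * \<epsilon>) / mixing_time P \<pi> \<epsilon> \<le> conductance P \<pi>"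
    unfolding conductance_def
    by (subst Min_ge_iff) (auto intro: cond_set_ge_mixing_time[OF st irr assms(3) \<open>0 < \<epsilon>\<close>])
  moreover have "(1/2 - \<epsilon>) / mixing_time P \<pi> \<epsilon> \<le> (1 - 2 * \<epsilon>) / mixing_time P \<pi> \<epsilon>"
    using \<open>\<epsilon> \<le> 1/2\<close> mixing_time_nonneg[OF st irr assms(3) \<open>0 < \<epsilon>\<close>] by (intro divide_right_mono) auto
  ultimately show ?thesis
    by (simp add: \<epsilon>_def)
qed

end
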